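(* Let $n$ be a positive integer, let $A(n)=(a_{ij})_{i,j\in\mathbb{N}}$ be the greedy matrix described in the context, and let $\sigma=2n^3-n(n-3)$. Then there exist integers $pp\geq 0$ and $p\geq 1$ such that $a_{i+p,j+p}=a_{ij}$ for all $i>pp$ and all $j\ge 1$, and $pp+p\leq 2^{\sigma^2}$.
   Context: $\mathbb{N}=\{1,2,3,\dots\}$. Fix a positive integer $n$. The infinite $\{0,1\}$-matrix $A(n)=(a_{ij})_{i,j\in\mathbb{N}}$ is defined recursively. Its entries are determined row by row (row $1$ first), and within each row from left to right, so that $a_{kl}$ is determined after all $a_{ij}$ with $i<k$ and all $a_{kj}$ with $j<l$. One sets $a_{kl}=1$ if and only if all of the following hold: (1) $\sum_{j<l}a_{kj}<n+1$; (2) $\sum_{i<k}a_{il}<n+1$; (3) there is no pair $(i,j)$ with $1\le i<k$, $1\le j<l$ and $a_{ij}=a_{il}=a_{kj}=1$. Otherwise $a_{kl}=0$. *)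

theory Defs
  imports Main
begin

text \<open>The greedy matrix A(n). Indices are 1-based; entries with index 0 are
  defined to be 0 (False) and are never used by the statement.
  greedy n k l is the entry a_{kl} of A(n) (True means 1).\<close>

function greedy :: "nat \<Rightarrow> nat \<Rightarrow> nat \<Rightarrow> bool" where
  "greedy n k l =
     (if k = 0 \<or> l = 0 then False
      else
        length (filter (\<lambda>j. greedy n k j) [1..<l]) < n + 1 \<and>
        length (filter (\<lambda>i. greedy n i l) [1..<k]) < n + 1 \<and>
        \<not> (\<exists>i\<in>set [1..<k]. \<exists>j\<in>set [1..<l]. greedy n i j \<and> greedy n i l \<and> greedy n k j))"
  by pat_completeness auto
termination
  by (relation "inv_image (less_than <*lex*> less_than) (\<lambda>(n, k, l). (k, l))") auto

definition entry :: "nat \<Rightarrow> nat \<Rightarrow> nat \<Rightarrow> nat" where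
  "entry n i j = (if greedy n i j then 1 else 0)"

end

(*
  Every row (and, by symmetry, every column) of A(n) contains exactly n + 1 ones.  When row k
  places a one in column l, each earlier column of row k is an earlier one of row k, or already
  saturated by the rows above (at most k - 1 such columns, by double counting), or blocked by a
  rectangle through an earlier one of row k (at most n^3 such columns).  Hence all ones lie in
  the band |k - l| <= D = n^3 + n.  The rule at (k, l) therefore only inspects the band entries
  of the previous 2D rows, a triangle of D (2D + 1) cells.  By pigeonhole this window recurs,
  shifted by some p along the diagonal, within 2^(D (2D + 1)) steps, and from then on the greedy
  rule reproduces the matrix shifted by p.  Finally D (2D + 1) + 1 <= sigma^2.
*)

theory Submission
  imports Defs
begin

declare greedy.simps[simp del]

lemma greedy_0_left [simp]: "\<not> greedy n 0 l"
  and greedy_0_right [simp]: "\<not> greedy n k 0"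
  by (subst greedy.simps; simp)+

lemma length_filter_upt_1: "\<not> P 0 \<Longrightarrow> length (filter P [1..<l]) = card {j. j < l \<and> P j}"
proof -
  assume "\<not> P 0"
  then have "set (filter P [1..<l]) = {j. j < l \<and> P j}"
    by (auto simp: Suc_le_eq intro: gr0I)
  then show ?thesis
    by (metis distinct_card distinct_filter distinct_upt)
qed

lemma bex_upt_1: "\<not> Q 0 \<Longrightarrow> (\<exists>i\<in>set [1..<k]. Q i) \<longleftrightarrow> (\<exists>i<k. Q i)"
  by (metis atLeastLessThan_iff gr0I less_eq_Suc_le set_upt One_nat_def)

lemma greedy_iff:
  "greedy n k l \<longleftrightarrow> k \<noteq> 0 \<and> l \<noteq> 0 \<and>
     card {j. j < l \<and> greedy n k j} < n + 1 \<and> card {i. i < k \<and> greedy n i l} < n + 1 \<and>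
     \<not> (\<exists>i<k. \<exists>j<l. greedy n i j \<and> greedy n i l \<and> greedy n k j)"
proof -
  have "(\<exists>i\<in>set [1..<k]. \<exists>j\<in>set [1..<l]. greedy n i j \<and> greedy n i l \<and> greedy n k j)
      \<longleftrightarrow> (\<exists>i<k. \<exists>j<l. greedy n i j \<and> greedy n i l \<and> greedy n k j)"
    by (subst bex_upt_1, simp)+ (rule refl)
  then show ?thesis
    by (subst greedy.simps)
       (simp only: length_filter_upt_1[where P = "greedy n k", OF greedy_0_right]
         length_filter_upt_1[where P = "\<lambda>i. greedy n i l", OF greedy_0_left], auto)
qed

lemma card_row_prefix_le: "card {j. j < l \<and> greedy n k j} \<le> n + 1"
proof (induction l)
  case (Suc l)
  show ?case
  proof (cases "greedy n k l")
    case True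
    then have "{j. j < Suc l \<and> greedy n k j} = insert l {j. j < l \<and> greedy n k j}"
      by auto
    moreover have "card {j. j < l \<and> greedy n k j} < n + 1"
      using True greedy_iff by blast
    ultimately show ?thesis
      by simp
  next
    case False
    then have "{j. j < Suc l \<and> greedy n k j} = {j. j < l \<and> greedy n k j}"
      using less_Suc_eq by auto
    then show ?thesis
      using Suc.IH by simp
  qed
qed simp

lemma finite_row: "finite {j. greedy n k j}"
  and card_row_le: "card {j. greedy n k j} \<le> n + 1"
proof -
  have "finite {j. greedy n k j} \<and> card {j. greedy n k j} \<le> n + 1"
  proof (rule finite_if_finite_subsets_card_bdd)
    fix G assume G: "G \<subseteq> {j. greedy n k j}" "finite G"
    have "G \<subseteq> {j. j < Suc (Max G) \<and> greedy n k j}"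
    proof
      fix x assume "x \<in> G"
      then have "x \<le> Max G"
        using G(2) by simp
      then show "x \<in> {j. j < Suc (Max G) \<and> greedy n k j}"
        using G(1) \<open>x \<in> G\<close> by auto
    qed
    then have "card G \<le> card {j. j < Suc (Max G) \<and> greedy n k j}"
      by (rule card_mono[rotated]) simp
    then show "card G \<le> n + 1"
      using card_row_prefix_le order_trans by blast
  qed
  then show "finite {j. greedy n k j}" "card {j. greedy n k j} \<le> n + 1"
    by simp_all
qed

lemma greedy_sym: "greedy n k l \<longleftrightarrow> greedy n l k"
proof (induction "k + l" arbitrary: k l rule: less_induct)
  case less
  have IH: "greedy n a b \<longleftrightarrow> greedy n b a" if "a + b < k + l" for a b
    using less that by blast
  have row: "{j. j < l \<and> greedy n k j} = {j. j < l \<and> greedy n j k}"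
    using IH[of k] by (metis (lifting) add_less_cancel_left)
  have col: "{i. i < k \<and> greedy n i l} = {i. i < k \<and> greedy n l i}"
    using IH[of _ l] by (metis (lifting) add_less_cancel_right)
  have rect: "(greedy n i j \<and> greedy n i l \<and> greedy n k j) \<longleftrightarrow>
      (greedy n j i \<and> greedy n l i \<and> greedy n j k)" if "i < k" "j < l" for i j
    using IH[of i j] IH[of i l] IH[of k j] that by auto
  show ?case
    unfolding greedy_iff[of n k l] greedy_iff[of n l k] row col
    using rect by blast
qed

text \<open>Columns to the right of all ones of rows 1, ..., k are empty above row k, so if row k
  were short the greedy rule would put a one there.\<close>

lemma card_row_eq:
  assumes "k \<noteq> 0"
  shows "card {j. greedy n k j} = n + 1"
proof (rule ccontr)
  assume "card {j. greedy n k j} \<noteq> n + 1"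
  then have short: "card {j. greedy n k j} < n + 1"
    using card_row_le[of n k] by linarith
  have "finite (\<Union>i\<le>k. {j. greedy n i j})"
    using finite_row by blast
  then obtain L where L: "\<And>i j. i \<le> k \<Longrightarrow> greedy n i j \<Longrightarrow> j < L"
    unfolding finite_nat_set_iff_bounded by blast
  have empty_col: "\<not> greedy n i (Suc L)" if "i \<le> k" for i
    using L[OF that, of "Suc L"] by auto
  have "card {j. j < Suc L \<and> greedy n k j} \<le> card {j. greedy n k j}"
    by (rule card_mono[OF finite_row]) auto
  then have "card {j. j < Suc L \<and> greedy n k j} < n + 1"
    using short by linarith
  moreover have "card {i. i < k \<and> greedy n i (Suc L)} = 0"
    using empty_col by (auto simp: card_eq_0_iff)
  moreover have "\<not> (\<exists>i<k. \<exists>j<Suc L. greedy n i j \<and> greedy n i (Suc L) \<and> greedy n k j)"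
    using empty_col by auto
  ultimately have "greedy n k (Suc L)"
    using assms greedy_iff[of n k "Suc L"] by (simp del: card_0_eq)
  then show False
    using empty_col by simp
qed

definition saturated_cols :: "nat \<Rightarrow> nat \<Rightarrow> nat set" where
  "saturated_cols n k = {c. n + 1 \<le> card {i. i < k \<and> greedy n i c}}"

lemma saturated_cols_subset: "saturated_cols n k \<subseteq> (\<Union>i<k. {c. greedy n i c})"
proof
  fix c assume "c \<in> saturated_cols n k"
  then have "0 < card {i. i < k \<and> greedy n i c}"
    unfolding saturated_cols_def by (simp only: mem_Collect_eq)
  then obtain i where "i < k" "greedy n i c"
    by (auto simp: card_gt_0_iff)
  then show "c \<in> (\<Union>i<k. {c. greedy n i c})"
    by blast
qed

lemma finite_saturated_cols: "finite (saturated_cols n k)"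
  by (rule finite_subset[OF saturated_cols_subset]) (simp add: finite_row)

lemma card_Int_Collect_eq_sum:
  "finite A \<Longrightarrow> card (A \<inter> {x. P x}) = (\<Sum>x\<in>A. if P x then 1 else 0)"
  by (simp add: sum.If_cases)

lemma card_saturated_cols_le: "card (saturated_cols n k) \<le> k - 1"
proof -
  let ?F = "saturated_cols n k"
  have col: "{i. i < k \<and> greedy n i c} = {1..<k} \<inter> {i. greedy n i c}" for c
    by (auto simp: Suc_le_eq) (metis greedy_0_left neq0_conv)
  have "card ?F * (n + 1) \<le> (\<Sum>c\<in>?F. card {i. i < k \<and> greedy n i c})"
    using sum_bounded_below[of ?F "n + 1"] unfolding saturated_cols_def by simp
  also have "\<dots> = (\<Sum>c\<in>?F. \<Sum>i\<in>{1..<k}. if greedy n i c then 1 else 0)"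
    unfolding col by (simp only: card_Int_Collect_eq_sum finite_atLeastLessThan)
  also have "\<dots> = (\<Sum>i\<in>{1..<k}. \<Sum>c\<in>?F. if greedy n i c then 1 else 0)"
    by (rule sum.swap)
  also have "\<dots> = (\<Sum>i\<in>{1..<k}. card (?F \<inter> {c. greedy n i c}))"
    by (simp only: card_Int_Collect_eq_sum finite_saturated_cols)
  also have "\<dots> \<le> (\<Sum>i\<in>{1..<k}. n + 1)"
    by (intro sum_mono order_trans[OF card_mono card_row_le]) (auto simp: finite_row)
  finally have "card ?F * (n + 1) \<le> (k - 1) * (n + 1)"
    by simp
  then show ?thesis
    by (simp only: mult_le_cancel2)
qed

lemma card_UN_le_mult:
  assumes "finite I" "card I \<le> a" "\<And>i. i \<in> I \<Longrightarrow> card (A i) \<le> b"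
  shows "card (\<Union>i\<in>I. A i) \<le> a * b"
proof -
  have "card (\<Union>i\<in>I. A i) \<le> (\<Sum>i\<in>I. card (A i))"
    using assms(1) by (rule card_UN_le)
  also have "\<dots> \<le> card I * b"
    using sum_bounded_above[of I "\<lambda>i. card (A i)" b] assms(3) by simp
  also have "\<dots> \<le> a * b"
    using assms(2) by simp
  finally show ?thesis .
qed

definition band_width :: "nat \<Rightarrow> nat" where
  "band_width n = n ^ 3 + n"

text \<open>Each column c < l is an earlier one of row k, saturated above row k, or blocked by a
  rectangle through one of the n earlier ones (k, j) of row k: at most n, k - 1 and n * n * n
  columns respectively.\<close>

lemma greedy_le_band_right:
  assumes "greedy n k l"
  shows "l \<le> k + band_width n"
proof -
  let ?R = "{j. j < l \<and> greedy n k j}"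
  let ?above = "\<lambda>j. {i. i < k \<and> greedy n i j}"
  define blocked where "blocked = (\<Union>j\<in>?R. \<Union>i\<in>?above j. {c. greedy n i c} - {j})"
  have k: "k \<noteq> 0" and card_R: "card ?R \<le> n"
    using assms greedy_iff[of n k l] by auto
  have card_blocked: "card blocked \<le> n * (n * n)"
    unfolding blocked_def
  proof (intro card_UN_le_mult card_R)
    fix j assume "j \<in> ?R"
    then show "card (?above j) \<le> n"
      using greedy_iff[of n k j] by auto
    fix i assume i: "i \<in> ?above j"
    then have "card {c. greedy n i c} = n + 1"
      using card_row_eq[of i n] by (cases i) auto
    then show "card ({c. greedy n i c} - {j}) \<le> n"
      using i by (simp add: card_Diff_singleton)
  qed simp_all
  have cover: "{1..<l} \<subseteq> saturated_cols n k \<union> ?R \<union> blocked"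
  proof
    fix c assume c: "c \<in> {1..<l}"
    show "c \<in> saturated_cols n k \<union> ?R \<union> blocked"
    proof (rule ccontr)
      assume "c \<notin> saturated_cols n k \<union> ?R \<union> blocked"
      then have not_sat: "c \<notin> saturated_cols n k" and "c \<notin> ?R" and not_blocked: "c \<notin> blocked"
        by auto
      then have "\<not> greedy n k c"
        using c by simp
      moreover have "card {j. j < c \<and> greedy n k j} < n + 1"
        using card_mono[of ?R "{j. j < c \<and> greedy n k j}"] card_R c by fastforce
      ultimately obtain i j where ij: "i < k" "j < c" "greedy n i j" "greedy n i c" "greedy n k j"
        using not_sat c k greedy_iff[of n k c] unfolding saturated_cols_def by auto
      then have "c \<in> blocked"
        unfolding blocked_def using c by (intro UN_I[of j] UN_I[of i]) auto
      then show False
        using not_blocked by contradiction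
    qed
  qed
  have "l - 1 \<le> card (saturated_cols n k \<union> ?R \<union> blocked)"
    using card_mono[OF _ cover] finite_saturated_cols by (simp add: blocked_def finite_row)
  also have "\<dots> \<le> card (saturated_cols n k) + card ?R + card blocked"
    by (meson add_mono card_Un_le le_trans order_refl)
  also have "\<dots> \<le> (k - 1) + n + n * (n * n)"
    using card_saturated_cols_le card_R card_blocked by (intro add_mono) auto
  finally show ?thesis
    using k unfolding band_width_def by (simp add: power3_eq_cube)
qed

lemma greedy_le_band_left: "greedy n k l \<Longrightarrow> k \<le> l + band_width n"
  using greedy_le_band_right[of n l k] greedy_sym[of n k l] by simp

lemma bex_less_add_shift:
  fixes Q :: "nat \<Rightarrow> bool"
  assumes "\<And>i. i < p \<Longrightarrow> \<not> Q i"
  shows "(\<exists>i<k + p. Q i) \<longleftrightarrow> (\<exists>i<k. Q (i + p))"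
proof
  assume "\<exists>i<k + p. Q i"
  then obtain i where "i < k + p" "Q i"
    by blast
  moreover have "p \<le> i"
    using assms[of i] \<open>Q i\<close> by (cases "i < p") auto
  ultimately show "\<exists>i<k. Q (i + p)"
    by (intro exI[of _ "i - p"]) auto
next
  assume "\<exists>i<k. Q (i + p)"
  then obtain i where "i < k" "Q (i + p)"
    by blast
  then show "\<exists>i<k + p. Q i"
    by (intro exI[of _ "i + p"]) simp
qed

lemma card_less_add_shift:
  fixes Q :: "nat \<Rightarrow> bool"
  assumes "\<And>i. i < p \<Longrightarrow> \<not> Q i"
  shows "card {i. i < k + p \<and> Q i} = card {i. i < k \<and> Q (i + p)}"
proof -
  have "{i. i < k + p \<and> Q i} = (\<lambda>i. i + p) ` {i. i < k \<and> Q (i + p)}"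
  proof (intro equalityI subsetI)
    fix i assume "i \<in> {i. i < k + p \<and> Q i}"
    then have "p \<le> i"
      using assms[of i] by (cases "i < p") auto
    then show "i \<in> (\<lambda>i. i + p) ` {i. i < k \<and> Q (i + p)}"
      using \<open>i \<in> {i. i < k + p \<and> Q i}\<close> by (intro image_eqI[of _ _ "i - p"]) auto
  qed auto
  then show ?thesis
    by (simp add: card_image)
qed

text \<open>By the band (D = band_width n), the nonzero entries inspected by the rule at (k, l) lie
  in rows at least k - 2 D and columns at least k - D, and 2 D < k keeps their shifted copies clear of the first
  p rows and columns.\<close>

lemma greedy_shift_step:
  assumes far: "2 * band_width n < k"
    and agree: "\<And>i j. k \<le> i + 2 * band_width n \<Longrightarrow> k \<le> j + band_width n \<Longrightarrow>
      i \<le> k \<Longrightarrow> j \<le> l \<Longrightarrow> (i, j) \<noteq> (k, l) \<Longrightarrow> greedy n (i + p) (j + p) = greedy n i j"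
  shows "greedy n (k + p) (l + p) = greedy n k l"
proof (cases "k \<le> l + band_width n \<and> l \<le> k + band_width n")
  case False
  then have "\<not> greedy n k l" "\<not> greedy n (k + p) (l + p)"
    using greedy_le_band_left[of n k l] greedy_le_band_right[of n k l]
      greedy_le_band_left[of n "k + p" "l + p"] greedy_le_band_right[of n "k + p" "l + p"]
    by linarith+
  then show ?thesis
    by simp
next
  case True
  have row: "greedy n (k + p) (j + p) = greedy n k j" if "j < l" for j
    using agree[of k j] greedy_le_band_left[of n k j] greedy_le_band_left[of n "k + p" "j + p"] that
    by fastforce
  have col: "greedy n (i + p) (l + p) = greedy n i l" if "i < k" for i
    using agree[of i l] greedy_le_band_right[of n i l] greedy_le_band_right[of n "i + p" "l + p"]
      True that by fastforce
  have rect: "greedy n (i + p) (j + p) = greedy n i j"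
    if "i < k" "j < l" "greedy n i l" "greedy n k j" for i j
    using agree[of i j] greedy_le_band_right[of n i l] greedy_le_band_left[of n k j] True that
    by fastforce
  have low_row: "\<not> greedy n (k + p) j" if "j < p" for j
    using greedy_le_band_left[of n "k + p" j] far that by linarith
  have low_col: "\<not> greedy n i (l + p)" if "i < p" for i
    using greedy_le_band_right[of n i "l + p"] far True that by linarith
  have card_row: "card {j. j < l + p \<and> greedy n (k + p) j} = card {j. j < l \<and> greedy n k j}"
    using card_less_add_shift[of p "greedy n (k + p)" l, OF low_row] row by (simp cong: conj_cong)
  have card_col: "card {i. i < k + p \<and> greedy n i (l + p)} = card {i. i < k \<and> greedy n i l}"
    using card_less_add_shift[of p "\<lambda>i. greedy n i (l + p)" k, OF low_col] col
    by (simp cong: conj_cong)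
  have "(\<exists>i<k + p. \<exists>j<l + p. greedy n i j \<and> greedy n i (l + p) \<and> greedy n (k + p) j)
      \<longleftrightarrow> (\<exists>i<k. \<exists>j<l + p. greedy n (i + p) j \<and> greedy n (i + p) (l + p) \<and> greedy n (k + p) j)"
    using low_col by (intro bex_less_add_shift) blast
  also have "\<dots> \<longleftrightarrow> (\<exists>i<k. \<exists>j<l. greedy n (i + p) (j + p) \<and> greedy n (i + p) (l + p) \<and>
      greedy n (k + p) (j + p))"
    using low_row by (intro ex_cong1 conj_cong refl bex_less_add_shift) blast
  also have "\<dots> \<longleftrightarrow> (\<exists>i<k. \<exists>j<l. greedy n i j \<and> greedy n i l \<and> greedy n k j)"
    using row col rect by meson
  finally have rectangle:
    "(\<exists>i<k + p. \<exists>j<l + p. greedy n i j \<and> greedy n i (l + p) \<and> greedy n (k + p) j)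
      \<longleftrightarrow> (\<exists>i<k. \<exists>j<l. greedy n i j \<and> greedy n i l \<and> greedy n k j)" .
  have "k \<noteq> 0" "l \<noteq> 0"
    using far True by auto
  then show ?thesis
    unfolding greedy_iff[of n "k + p" "l + p"] greedy_iff[of n k l] card_row card_col rectangle
    by simp
qed

lemma greedy_shift_periodic:
  assumes far: "2 * band_width n < t"
    and window: "\<And>i j. t \<le> i + 2 * band_width n \<Longrightarrow> i < t \<Longrightarrow> t \<le> j + band_width n \<Longrightarrow>
      greedy n (i + p) (j + p) = greedy n i j"
    and "t \<le> k"
  shows "greedy n (k + p) (l + p) = greedy n k l"
  using \<open>t \<le> k\<close>
proof (induction k arbitrary: l rule: less_induct)
  case (less k)
  note earlier_rows = less.IH
  show ?case
  proof (induction l rule: less_induct)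
    case (less l)
    show ?case
    proof (rule greedy_shift_step)
      show "2 * band_width n < k"
        using far \<open>t \<le> k\<close> by linarith
      fix i j
      assume near: "k \<le> i + 2 * band_width n" "k \<le> j + band_width n"
        and before: "i \<le> k" "j \<le> l" "(i, j) \<noteq> (k, l)"
      consider "i < t" | "t \<le> i" "i < k" | "i = k" "j < l"
        using before by fastforce
      then show "greedy n (i + p) (j + p) = greedy n i j"
      proof cases
        case 1
        then show ?thesis
          using window near \<open>t \<le> k\<close> by simp
      next
        case 2
        then show ?thesis
          using earlier_rows by blast
      next
        case 3
        then show ?thesis
          using less.IH by blast
      qed
    qed
  qed
qed

text \<open>With D = band_width n, the pair (x, y) stands for the entry (t - 2 D + x, t - D + y); the condition y \<le> x is
  the band condition j \<le> i + D.\<close>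

definition greedy_window :: "nat \<Rightarrow> nat \<Rightarrow> (nat \<times> nat) set" where
  "greedy_window n t = {(x, y). x < 2 * band_width n \<and> y \<le> x \<and>
     greedy n (t - 2 * band_width n + x) (t - band_width n + y)}"

lemma greedy_window_subset:
  "greedy_window n t \<subseteq> Sigma {..<2 * band_width n} (\<lambda>x. {..x})"
  unfolding greedy_window_def by auto

lemma card_window_domain:
  "card (Sigma {..<2 * D} (\<lambda>x. {..x})) = D * (2 * D + 1)"
proof -
  have gauss: "2 * (\<Sum>x<m. Suc x) = m * (m + 1)" for m
    by (induction m) (auto simp: algebra_simps)
  have "card (Sigma {..<2 * D} (\<lambda>x. {..x})) = (\<Sum>x<2 * D. Suc x)"
    by simp
  with gauss[of "2 * D"] show ?thesis
    by simp
qed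

lemma greedy_window_eq_imp_shift_eq:
  assumes "2 * band_width n < t" "greedy_window n (t + p) = greedy_window n t"
    and i: "t \<le> i + 2 * band_width n" "i < t" and j: "t \<le> j + band_width n"
  shows "greedy n (i + p) (j + p) = greedy n i j"
proof (cases "j \<le> i + band_width n")
  case False
  then show ?thesis
    using greedy_le_band_right[of n i j] greedy_le_band_right[of n "i + p" "j + p"] by auto
next
  case True
  define x where "x = i + 2 * band_width n - t"
  define y where "y = j + band_width n - t"
  have "x < 2 * band_width n" "y \<le> x"
    using i j True unfolding x_def y_def by linarith+
  moreover have "t - 2 * band_width n + x = i" "t - band_width n + y = j"
    and "t + p - 2 * band_width n + x = i + p" "t + p - band_width n + y = j + p"
    using assms(1) i j unfolding x_def y_def by linarith+
  ultimately show ?thesis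
    using assms(2) unfolding greedy_window_def set_eq_iff
    by (metis (no_types, lifting) case_prod_conv mem_Collect_eq)
qed

lemma greedy_window_repeats:
  obtains t p where "2 * band_width n < t" "1 \<le> p"
    "t + p \<le> 2 * band_width n + 1 + 2 ^ (band_width n * (2 * band_width n + 1))"
    "greedy_window n (t + p) = greedy_window n t"
proof -
  let ?D = "band_width n"
  let ?b = "?D * (2 * ?D + 1)"
  let ?times = "{2 * ?D + 1 .. 2 * ?D + 1 + 2 ^ ?b}"
  have "greedy_window n ` ?times \<subseteq> Pow (Sigma {..<2 * ?D} (\<lambda>x. {..x}))"
    using greedy_window_subset by blast
  then have "card (greedy_window n ` ?times) \<le> 2 ^ ?b"
    using card_mono[of "Pow (Sigma {..<2 * ?D} (\<lambda>x. {..x}))"] card_window_domain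
    by (fastforce simp: card_Pow)
  then have "\<not> inj_on (greedy_window n) ?times"
    by (intro pigeonhole) simp
  then obtain t t' where "t \<in> ?times" "t' \<in> ?times" "t < t'" "greedy_window n t' = greedy_window n t"
    unfolding inj_on_def by (metis linorder_neqE_nat)
  then show thesis
    by (intro that[of t "t' - t"]) auto
qed

lemma greedy_eventually_periodic:
  obtains p t where "1 \<le> p"
    "t + p \<le> 2 * band_width n + 1 + 2 ^ (band_width n * (2 * band_width n + 1))"
    "\<And>k l. t \<le> k \<Longrightarrow> greedy n (k + p) (l + p) = greedy n k l"
proof -
  obtain t p where far: "2 * band_width n < t" and p: "1 \<le> p"
    and bound: "t + p \<le> 2 * band_width n + 1 + 2 ^ (band_width n * (2 * band_width n + 1))"
    and repeat: "greedy_window n (t + p) = greedy_window n t"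
    by (rule greedy_window_repeats)
  have "greedy n (k + p) (l + p) = greedy n k l" if "t \<le> k" for k l
    using far greedy_window_eq_imp_shift_eq[OF far repeat] that by (rule greedy_shift_periodic)
  with p bound show thesis
    by (rule that)
qed

lemma window_size_lt_sigma_sq:
  fixes n :: nat
  assumes "1 \<le> n"
  shows "int (band_width n * (2 * band_width n + 1)) + 1 \<le>
    (2 * int n ^ 3 - int n * (int n - 3)) ^ 2"
proof -
  define M where "M = int n - 1"
  have n: "int n = M + 1" and "0 \<le> M"
    using assms unfolding M_def by simp_all
  have "(2 * int n ^ 3 - int n * (int n - 3)) ^ 2 - (int (band_width n * (2 * band_width n + 1)) + 1)
      = 2 * M ^ 6 + 8 * M ^ 5 + 19 * M ^ 4 + 29 * M ^ 3 + 30 * M ^ 2 + 20 * M + 5"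
    unfolding band_width_def of_nat_mult of_nat_add of_nat_power of_nat_numeral of_nat_1 n
    by algebra
  moreover have "0 \<le> 2 * M ^ 6 + 8 * M ^ 5 + 19 * M ^ 4 + 29 * M ^ 3 + 30 * M ^ 2 + 20 * M + 5"
    using \<open>0 \<le> M\<close> by (intro add_nonneg_nonneg mult_nonneg_nonneg zero_le_power) auto
  ultimately show ?thesis
    by linarith
qed

theorem theorem3p3:
  fixes n :: nat
  assumes "n \<ge> 1"
  defines "\<sigma> \<equiv> 2 * int n ^ 3 - int n * (int n - 3)"
  shows "\<exists>pp p :: nat. p \<ge> 1 \<and>
           (\<forall>i j. i > pp \<longrightarrow> j \<ge> 1 \<longrightarrow> entry n (i + p) (j + p) = entry n i j) \<and>
           int (pp + p) \<le> 2 ^ nat (\<sigma> ^ 2)"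
proof -
  let ?D = "band_width n"
  let ?b = "?D * (2 * ?D + 1)"
  obtain p t where "1 \<le> p" and bound: "t + p \<le> 2 * ?D + 1 + 2 ^ ?b"
    and periodic: "\<And>k l. t \<le> k \<Longrightarrow> greedy n (k + p) (l + p) = greedy n k l"
    using greedy_eventually_periodic[of n] by blast
  have "2 * ?D \<le> ?b"
    by (simp add: algebra_simps)
  then have "t - 1 + p \<le> 2 ^ ?b + 2 ^ ?b"
    using bound less_exp[of ?b] by linarith
  also have "\<dots> = 2 ^ (?b + 1)"
    by simp
  also have "\<dots> \<le> 2 ^ nat (\<sigma> ^ 2)"
  proof (rule power_increasing)
    have "int (?b + 1) \<le> \<sigma> ^ 2"
      using window_size_lt_sigma_sq[OF assms(1)] unfolding \<sigma>_def by simp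
    then show "?b + 1 \<le> nat (\<sigma> ^ 2)"
      by (simp add: le_nat_iff)
  qed simp
  finally have "int (t - 1 + p) \<le> 2 ^ nat (\<sigma> ^ 2)"
    by (metis of_nat_le_iff of_nat_numeral of_nat_power)
  moreover have "entry n (i + p) (j + p) = entry n i j" if "t - 1 < i" for i j
    using periodic[of i j] that unfolding entry_def by simp
  ultimately show ?thesis
    using \<open>1 \<le> p\<close> by blast
qed

end
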